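(* Consider the reduced maps of the Bowtie network described in the context, with $\delta<0$, $\tilde\delta<0$ and $e_{23}>e_{24}$. Then there exist points $(x_3,x_4,x_5)\in(0,1)^3$ with $x_4>x_3^{e_{24}/e_{23}}$ (i.e.\ not in $\tilde{\mathcal{E}}_1$) such that $g_{RL}(x_3,x_4,x_5)\notin\mathcal{E}_1$, and there also exist points $(x_3,x_4,x_5)\in(0,1)^3$ with $x_4>x_3^{e_{24}/e_{23}}$ such that $g_{RL}(x_3,x_4,x_5)\in\mathcal{E}_1$. (That is, both transitions $RLR$ and $RLL$ occur.)
   Context: Setting (Bowtie network). A $\mathbb{Z}_2^5$-equivariant vector field on $\mathbb{R}^5$ has equilibria $\xi_j$ on the $x_j$-axes and two heteroclinic cycles $R=[\xi_1\to\xi_2\to\xi_3\to\xi_1]$ and $L=[\xi_2\to\xi_4\to\xi_5\to\xi_2]$, each connection $[\xi_i\to\xi_j]$ lying in the $x_ix_j$-plane. All eigenvalues are real: at $\xi_j$, $-c_{jk}<0$ is the contracting and $e_{jk}>0$ the expanding eigenvalue in the $x_k$-direction (positive numbers $e_{12},c_{13},c_{14},c_{15}$; $c_{21},c_{25},e_{23},e_{24}$; $e_{31},c_{32},c_{34},c_{35}$; $e_{45},c_{41},c_{42},c_{43}$; $e_{52},c_{51},c_{53},c_{54}$ at $\xi_1,\dots,\xi_5$ respectively). Global maps are the identity and local maps are given by the linearized flow. Define $\rho=\frac{c_{42}c_{54}c_{25}}{e_{24}e_{45}e_{52}}$, $\tilde\rho=\frac{c_{32}c_{13}c_{21}}{e_{23}e_{31}e_{12}}$,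 $\nu=-\frac{e_{23}}{e_{24}}+\frac{c_{25}c_{43}}{e_{24}e_{45}}+\frac{c_{53}c_{42}c_{25}}{e_{45}e_{24}e_{52}}$, $\mu=\frac{c_{21}}{e_{24}}+\frac{c_{25}c_{41}}{e_{24}e_{45}}+\frac{c_{51}c_{42}c_{25}}{e_{45}e_{24}e_{52}}$, $\delta=\frac{c_{43}}{e_{45}}+\frac{c_{53}c_{42}}{e_{52}e_{45}}-\frac{e_{23}c_{54}c_{42}}{e_{52}e_{45}e_{24}}$, $\tilde\delta=\frac{c_{34}}{e_{31}}+\frac{c_{14}c_{32}}{e_{12}e_{31}}-\frac{e_{24}c_{13}c_{32}}{e_{12}e_{31}e_{23}}$, $\alpha=\frac{c_{41}}{e_{45}}+\frac{c_{42}c_{51}}{e_{45}e_{52}}$, $\beta=\frac{c_{43}}{e_{45}}+\frac{c_{42}c_{53}}{e_{45}e_{52}}$. Reduced coordinates: $(x_3,x_4,x_5)$ on the cross section $H_1^{\mathrm{out},2}$ near the $R$-cycle and $(x_1,x_3,x_4)$ on $H_5^{\mathrm{out},2}$ near the $L$-cycle. $\tilde{\mathcal{E}}_1=\{(x_3,x_4,x_5):0<x_3<1,x_4>0,x_5>0,x_4<x_3^{e_{24}/e_{23}}\}$ is the set of points of $H_1^{\mathrm{out},2}$ that take a turn around the $R$-cycle (after $\xi_2$ they go to $\xi_3$); points with $x_4>x_3^{e_{24}/e_{23}}$ go from $\xi_2$ to $\xi_4$. $\mathcal{E}_1=\{(x_1,x_3,x_4):x_1>0,x_3>0,0<x_4<1,x_4>x_3^{e_{24}/e_{23}}\}$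 is the set of points of $H_5^{\mathrm{out},2}$ that take a turn around the $L$-cycle (after $\xi_2$ they go to $\xi_4$ and then $\xi_5$); its complement consists of points going from $\xi_2$ to $\xi_3$, i.e.\ back to the $R$-cycle. The transition map from $H_1^{\mathrm{out},2}$ via $\xi_2,\xi_4,\xi_5$ to $H_5^{\mathrm{out},2}$, defined for $x_4>x_3^{e_{24}/e_{23}}$, is $g_{RL}(x_3,x_4,x_5)=\big(x_4^{\mu}x_5^{\alpha},\ x_3x_4^{\nu}x_5^{\beta},\ x_4^{\rho}x_5^{\frac{e_{24}}{c_{25}}\rho}\big)$. *)

theory Defs
  imports Complex_Main
begin

text \<open>Eigenvalue data of the Bowtie network (all positive reals).
  Field names follow the paper: e_ij expanding, c_ij contracting eigenvalue at xi_i in x_j direction.\<close>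
record bowtie =
  e12 :: real  c13 :: real  c14 :: real  c15 :: real
  c21 :: real  c25 :: real  e23 :: real  e24 :: real
  e31 :: real  c32 :: real  c34 :: real  c35 :: real
  e45 :: real  c41 :: real  c42 :: real  c43 :: real
  e52 :: real  c51 :: real  c53 :: real  c54 :: real

definition bowtie_pos :: "bowtie \<Rightarrow> bool" where
  "bowtie_pos B \<longleftrightarrow>
     0 < e12 B \<and> 0 < c13 B \<and> 0 < c14 B \<and> 0 < c15 B \<and>
     0 < c21 B \<and> 0 < c25 B \<and> 0 < e23 B \<and> 0 < e24 B \<and>
     0 < e31 B \<and> 0 < c32 B \<and> 0 < c34 B \<and> 0 < c35 B \<and>
     0 < e45 B \<and> 0 < c41 B \<and> 0 < c42 B \<and> 0 < c43 B \<and>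
     0 < e52 B \<and> 0 < c51 B \<and> 0 < c53 B \<and> 0 < c54 B"

definition rho :: "bowtie \<Rightarrow> real" where
  "rho B = c42 B * c54 B * c25 B / (e24 B * e45 B * e52 B)"

definition rho_t :: "bowtie \<Rightarrow> real" where
  "rho_t B = c32 B * c13 B * c21 B / (e23 B * e31 B * e12 B)"

definition nu :: "bowtie \<Rightarrow> real" where
  "nu B = - e23 B / e24 B + c25 B * c43 B / (e24 B * e45 B)
          + c53 B * c42 B * c25 B / (e45 B * e24 B * e52 B)"

definition mu :: "bowtie \<Rightarrow> real" where
  "mu B = c21 B / e24 B + c25 B * c41 B / (e24 B * e45 B)
          + c51 B * c42 B * c25 B / (e45 B * e24 B * e52 B)"

definition delta :: "bowtie \<Rightarrow> real" where
  "delta B = c43 B / e45 B + c53 B * c42 B / (e52 B * e45 B)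
             - e23 B * c54 B * c42 B / (e52 B * e45 B * e24 B)"

definition delta_t :: "bowtie \<Rightarrow> real" where
  "delta_t B = c34 B / e31 B + c14 B * c32 B / (e12 B * e31 B)
               - e24 B * c13 B * c32 B / (e12 B * e31 B * e23 B)"

definition alpha :: "bowtie \<Rightarrow> real" where
  "alpha B = c41 B / e45 B + c42 B * c51 B / (e45 B * e52 B)"

definition beta :: "bowtie \<Rightarrow> real" where
  "beta B = c43 B / e45 B + c42 B * c53 B / (e45 B * e52 B)"

text \<open>Transition map g_RL : H_1^{out,2} (coords x3,x4,x5) \<rightarrow> H_5^{out,2} (coords x1,x3,x4).\<close>
definition g_RL :: "bowtie \<Rightarrow> real \<times> real \<times> real \<Rightarrow> real \<times> real \<times> real" where
  "g_RL B = (\<lambda>(x3, x4, x5).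
     (x4 powr mu B * x5 powr alpha B,
      x3 * x4 powr nu B * x5 powr beta B,
      x4 powr rho B * x5 powr (e24 B / c25 B * rho B)))"

definition E1_t :: "bowtie \<Rightarrow> (real \<times> real \<times> real) set" where
  "E1_t B = {(x3, x4, x5). 0 < x3 \<and> x3 < 1 \<and> 0 < x4 \<and> 0 < x5 \<and>
                            x4 < x3 powr (e24 B / e23 B)}"

definition E1 :: "bowtie \<Rightarrow> (real \<times> real \<times> real) set" where
  "E1 B = {(x1, x3, x4). 0 < x1 \<and> 0 < x3 \<and> 0 < x4 \<and> x4 < 1 \<and>
                          x3 powr (e24 B / e23 B) < x4}"

end

theory Submission
  imports Defs
begin

text \<open>In logarithmic coordinates \<open>(a, b, c) = (ln x\<^sub>3, ln x\<^sub>4, ln x\<^sub>5)\<close> the map \<open>g_RL\<close> is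
  linear, the domain condition \<open>x\<^sub>4 > x\<^sub>3\<^bsup>e\<^sub>2\<^sub>4/e\<^sub>2\<^sub>3\<^esup>\<close> reads \<open>e\<^sub>2\<^sub>4 a < e\<^sub>2\<^sub>3 b\<close>, and
  \<open>g_RL(x) \<in> E\<^sub>1\<close> reads \<open>e\<^sub>2\<^sub>4 a + \<delta> (c\<^sub>2\<^sub>5 b + e\<^sub>2\<^sub>4 c) < e\<^sub>2\<^sub>3 b\<close>. With \<open>\<delta> < 0\<close> the term
  \<open>\<delta> e\<^sub>2\<^sub>4 c\<close> can be made as large as we like by taking \<open>c\<close> very negative, which leaves \<open>E\<^sub>1\<close>;
  taking \<open>b\<close> and \<open>c\<close> close to \<open>0\<close> instead enters \<open>E\<^sub>1\<close>.\<close>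

lemma g_RL_exp:
  "g_RL B (exp a, exp b, exp c) =
    (exp (mu B * b + alpha B * c), exp (a + nu B * b + beta B * c),
     exp (rho B * b + (e24 B / c25 B * rho B) * c))"
  unfolding g_RL_def by (simp add: powr_def exp_add[symmetric] algebra_simps)

lemma exp_gt_exp_powr_iff:
  fixes a b :: real
  assumes "0 < q"
  shows "exp a powr (p / q) < exp b \<longleftrightarrow> p * a < q * b"
  using assms by (simp add: powr_def pos_divide_less_eq mult.commute)

lemma g_RL_exp_mem_E1_iff:
  assumes "bowtie_pos B" and "b < 0" and "c < 0"
  shows "g_RL B (exp a, exp b, exp c) \<in> E1 B \<longleftrightarrow>
    e24 B * a + delta B * (c25 B * b + e24 B * c) < e23 B * b"
proof -
  have pos: "0 < c25 B" "0 < e23 B" "0 < e24 B" "0 < e45 B" "0 < e52 B"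
    "0 < c42 B" "0 < c54 B"
    using assms(1) unfolding bowtie_pos_def by simp_all
  define k where "k = e24 B / c25 B * rho B"
  have "0 < rho B" "0 < k"
    using pos unfolding k_def rho_def by simp_all
  then have "rho B * b + k * c < 0"
    using assms(2,3) by (simp add: add_neg_neg mult_pos_neg)
  then have "g_RL B (exp a, exp b, exp c) \<in> E1 B \<longleftrightarrow>
      e24 B * (a + nu B * b + beta B * c) < e23 B * (rho B * b + k * c)"
    unfolding g_RL_exp E1_def k_def[symmetric] using exp_gt_exp_powr_iff pos(2) by simp
  also have "e23 B * (rho B * b + k * c) - e24 B * (a + nu B * b + beta B * c)
      = e23 B * b - (e24 B * a + delta B * (c25 B * b + e24 B * c))"
    unfolding k_def rho_def nu_def beta_def delta_def using pos by (simp add: field_simps)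
  then have "e24 B * (a + nu B * b + beta B * c) < e23 B * (rho B * b + k * c) \<longleftrightarrow>
      e24 B * a + delta B * (c25 B * b + e24 B * c) < e23 B * b"
    by linarith
  finally show ?thesis .
qed

lemma g_RL_leaves_E1:
  assumes "bowtie_pos B" and "delta B < 0"
  obtains a b c where "a < 0" "b < 0" "c < 0" "e24 B * a < e23 B * b"
    "g_RL B (exp a, exp b, exp c) \<notin> E1 B"
proof -
  have pos: "0 < c25 B" "0 < e23 B" "0 < e24 B"
    using assms(1) unfolding bowtie_pos_def by simp_all
  define b where "b = - e24 B / (2 * e23 B)"
  define c where "c = 1 / delta B"
  have "b < 0" "c < 0" "e24 B * -1 < e23 B * b"
    using pos assms(2) by (simp_all add: b_def c_def)
  \<comment> \<open>with \<open>c = 1/\<delta>\<close> the contributions of \<open>a = -1\<close> and \<open>c\<close> cancel\<close>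
  have "e24 B * -1 + delta B * (c25 B * b + e24 B * c) = delta B * c25 B * b"
    using assms(2) by (simp add: c_def field_simps)
  moreover have "e23 B * b < 0" "0 < delta B * c25 B * b"
    using pos assms(2) \<open>b < 0\<close> by (simp_all add: mult_pos_neg mult_neg_pos mult_neg_neg)
  ultimately have "g_RL B (exp (-1), exp b, exp c) \<notin> E1 B"
    using g_RL_exp_mem_E1_iff[OF assms(1) \<open>b < 0\<close> \<open>c < 0\<close>] by simp
  with \<open>b < 0\<close> \<open>c < 0\<close> \<open>e24 B * -1 < e23 B * b\<close> show thesis
    by (intro that) simp_all
qed

lemma g_RL_enters_E1:
  assumes "bowtie_pos B" and "delta B < 0"
  obtains a b c where "a < 0" "b < 0" "c < 0" "e24 B * a < e23 B * b"
    "g_RL B (exp a, exp b, exp c) \<in> E1 B"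
proof -
  have pos: "0 < c25 B" "0 < e23 B" "0 < e24 B"
    using assms(1) unfolding bowtie_pos_def by simp_all
  define s where "s = e23 B - delta B * (c25 B + e24 B)"
  define e where "e = e24 B / (2 * s)"
  have "e23 B < s"
    using pos assms(2) by (simp add: s_def mult_neg_pos)
  then have "0 < e" "s * e < e24 B" "e23 B * e < e24 B"
    using pos by (simp_all add: e_def field_simps)
  then have "g_RL B (exp (-1), exp (-e), exp (-e)) \<in> E1 B"
    using g_RL_exp_mem_E1_iff[OF assms(1), of "-e" "-e" "-1"]
    by (simp add: s_def algebra_simps)
  with \<open>0 < e\<close> \<open>e23 B * e < e24 B\<close> show thesis
    by (intro that) simp_all
qed

theorem proposition4p5:
  fixes B :: bowtie
  assumes "bowtie_pos B"
    and "delta B < 0" and "delta_t B < 0" and "e23 B > e24 B"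
  shows "(\<exists>x3 x4 x5. x3 \<in> {0<..<1} \<and> x4 \<in> {0<..<1} \<and> x5 \<in> {0<..<1} \<and>
            x4 > x3 powr (e24 B / e23 B) \<and> g_RL B (x3, x4, x5) \<notin> E1 B)
       \<and> (\<exists>x3 x4 x5. x3 \<in> {0<..<1} \<and> x4 \<in> {0<..<1} \<and> x5 \<in> {0<..<1} \<and>
            x4 > x3 powr (e24 B / e23 B) \<and> g_RL B (x3, x4, x5) \<in> E1 B)"
proof -
  have e23: "0 < e23 B"
    using assms(1) unfolding bowtie_pos_def by simp
  show ?thesis
  proof
    obtain a b c where "a < 0" "b < 0" "c < 0" "e24 B * a < e23 B * b"
        "g_RL B (exp a, exp b, exp c) \<notin> E1 B"
      using g_RL_leaves_E1 assms(1,2) .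
    then show "\<exists>x3 x4 x5. x3 \<in> {0<..<1} \<and> x4 \<in> {0<..<1} \<and> x5 \<in> {0<..<1} \<and>
            x4 > x3 powr (e24 B / e23 B) \<and> g_RL B (x3, x4, x5) \<notin> E1 B"
      using exp_gt_exp_powr_iff[OF e23]
      by (intro exI[of _ "exp a"] exI[of _ "exp b"] exI[of _ "exp c"]) simp
  next
    obtain a b c where "a < 0" "b < 0" "c < 0" "e24 B * a < e23 B * b"
        "g_RL B (exp a, exp b, exp c) \<in> E1 B"
      using g_RL_enters_E1 assms(1,2) .
    then show "\<exists>x3 x4 x5. x3 \<in> {0<..<1} \<and> x4 \<in> {0<..<1} \<and> x5 \<in> {0<..<1} \<and>
            x4 > x3 powr (e24 B / e23 B) \<and> g_RL B (x3, x4, x5) \<in> E1 B"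
      using exp_gt_exp_powr_iff[OF e23]
      by (intro exI[of _ "exp a"] exI[of _ "exp b"] exI[of _ "exp c"]) simp
  qed
qed

end
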